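(* Let $M,N\in\mathbb{R}^{(k+n)\times(k+n)}$ be symmetric, partitioned as $N=\begin{bmatrix} N_{11} & N_{12}\\ N_{12}^\top & N_{22}\end{bmatrix}$ with $N_{11}\in\mathbb{R}^{k\times k}$, $N_{22}\in\mathbb{R}^{n\times n}$. Assume $N$ is nonsingular, $N_{11}\ge 0$ and $N_{22}<0$. Let $\mathcal{S}_N:=\{Z\in\mathbb{R}^{n\times k}\mid \begin{bmatrix} I\\ Z\end{bmatrix}^\top N\begin{bmatrix} I\\ Z\end{bmatrix}\ge 0\}$. Then $\begin{bmatrix} I\\ Z\end{bmatrix}^\top M\begin{bmatrix} I\\ Z\end{bmatrix}>0$ for all $Z\in\mathcal{S}_N$ if and only if there exists $\alpha\ge 0$ such that $M-\alpha N>0$.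
   Context: $I$ denotes the $k\times k$ identity. For symmetric matrices, $\ge 0$ means positive semidefinite and $>0$ positive definite. *)

theory Defs
  imports "HOL-Analysis.Analysis"
begin

definition symmetric_mat :: "real^'m^'m \<Rightarrow> bool" where
  "symmetric_mat A \<longleftrightarrow> transpose A = A"

definition psd :: "real^'m^'m \<Rightarrow> bool" where
  "psd A \<longleftrightarrow> symmetric_mat A \<and> (\<forall>x. 0 \<le> x \<bullet> (A *v x))"

definition pd :: "real^'m^'m \<Rightarrow> bool" where
  "pd A \<longleftrightarrow> symmetric_mat A \<and> (\<forall>x. x \<noteq> 0 \<longrightarrow> 0 < x \<bullet> (A *v x))"

definition blk11 :: "real^('k::finite+'n::finite)^('k+'n) \<Rightarrow> real^'k^'k" where
  "blk11 N = (\<chi> i j. N $ Inl i $ Inl j)"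

definition blk22 :: "real^('k::finite+'n::finite)^('k+'n) \<Rightarrow> real^'n^'n" where
  "blk22 N = (\<chi> i j. N $ Inr i $ Inr j)"

definition stackIZ :: "real^'k::finite^'n::finite \<Rightarrow> real^'k^('k+'n)" where
  "stackIZ Z = (\<chi> i j. case i of Inl a \<Rightarrow> (if a = j then 1 else 0) | Inr b \<Rightarrow> Z $ b $ j)"

definition quadIZ :: "real^('k::finite+'n::finite)^('k+'n) \<Rightarrow> real^'k^'n \<Rightarrow> real^'k^'k" where
  "quadIZ N Z = transpose (stackIZ Z) ** N ** stackIZ Z"

definition S_N :: "real^('k::finite+'n::finite)^('k+'n) \<Rightarrow> (real^'k^'n) set" where
  "S_N N = {Z. psd (quadIZ N Z)}"

end

theory Submission
  imports Defs
begin

text \<open>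
  If \<open>M - \<alpha> N > 0\<close> with \<open>\<alpha> \<ge> 0\<close>, then \<open>[I; Z]\<^sup>T M [I; Z] > \<alpha> [I; Z]\<^sup>T N [I; Z] \<ge> 0\<close> on \<open>S_N\<close>.
  Conversely, every nonzero \<open>x\<close> with \<open>x\<^sup>T N x \<ge> 0\<close> is of the form \<open>[I; Z] \<xi>\<close> with \<open>Z \<in> S_N\<close> and
  \<open>\<xi> \<noteq> 0\<close>: split \<open>x = [\<xi>; H \<xi>] + [0; y]\<close> with \<open>H = -N\<^sub>2\<^sub>2\<^sup>-\<^sup>1 N\<^sub>2\<^sub>1\<close>, two \<open>N\<close>-orthogonal pieces, and
  take \<open>Z\<close> a rank-one update of \<open>H\<close>. So \<open>M\<close> is positive on the cone \<open>x\<^sup>T N x \<ge> 0\<close>, and the strict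
  S-lemma yields \<open>\<alpha>\<close>; its Slater point is \<open>[\<xi>; H \<xi>]\<close>, where invertibility of \<open>N\<close> makes the
  Schur complement of \<open>N\<^sub>2\<^sub>2\<close> positive definite.
\<close>

section \<open>Quadratic forms\<close>

definition qform :: "real^'m^'m \<Rightarrow> real^'m \<Rightarrow> real" where
  "qform A x = x \<bullet> (A *v x)"

definition bform :: "real^'m^'m \<Rightarrow> real^'m \<Rightarrow> real^'m \<Rightarrow> real" where
  "bform A x y = x \<bullet> (A *v y)"

lemma psd_iff_qform: "psd A \<longleftrightarrow> symmetric_mat A \<and> (\<forall>x. 0 \<le> qform A x)"
  by (simp add: psd_def qform_def)

lemma pd_iff_qform: "pd A \<longleftrightarrow> symmetric_mat A \<and> (\<forall>x. x \<noteq> 0 \<longrightarrow> 0 < qform A x)"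
  by (simp add: pd_def qform_def)

lemma bform_commute: "symmetric_mat A \<Longrightarrow> bform A x y = bform A y x"
  unfolding bform_def symmetric_mat_def
  by (metis dot_lmul_matrix inner_commute transpose_matrix_vector)

lemma qform_add_scaleR:
  "qform A (a + c *\<^sub>R b) = qform A a + c * (bform A a b + bform A b a) + c\<^sup>2 * qform A b"
  unfolding qform_def bform_def
  by (simp add: algebra_simps inner_add_left inner_add_right power2_eq_square)

lemma qform_add: "qform A (a + b) = qform A a + bform A a b + bform A b a + qform A b"
  using qform_add_scaleR[of A a 1 b] by simp

lemma qform_scaleR: "qform A (c *\<^sub>R x) = c\<^sup>2 * qform A x"
  using qform_add_scaleR[of A 0 c x] by (simp add: qform_def bform_def)

lemma qform_uminus [simp]: "qform A (- x) = qform A x"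
  using qform_scaleR[of A "- 1" x] by simp

lemma qform_0 [simp]: "qform A 0 = 0"
  by (simp add: qform_def)

lemma matrix_vector_mult_uminus_left: "(- A) *v x = - (A *v (x :: real^'n))"
  by (simp add: matrix_vector_mult_def vec_eq_iff sum_negf)

lemma qform_uminus_mat: "qform (- A) x = - qform A x"
  by (simp add: qform_def matrix_vector_mult_uminus_left)

lemma qform_diff_scaleR: "qform (A - c *\<^sub>R B) x = qform A x - c * qform B x"
  by (simp add: qform_def matrix_vector_mult_diff_rdistrib inner_diff_right
      scaleR_matrix_vector_assoc[symmetric])

lemma qform_mat_1: "qform (mat 1) x = x \<bullet> x"
  by (simp add: qform_def)

lemma continuous_on_qform: "continuous_on S (qform A)"
  unfolding qform_def
  by (intro continuous_intros linear_continuous_on matrix_vector_mul_bounded_linear)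

lemma symmetric_mat_diff_scaleR:
  "symmetric_mat A \<Longrightarrow> symmetric_mat B \<Longrightarrow> symmetric_mat (A - c *\<^sub>R B)"
  unfolding symmetric_mat_def by (simp add: transpose_def vec_eq_iff)

lemma bform_square_le:
  assumes "symmetric_mat A" "0 \<le> qform A a" "\<And>t. 0 \<le> qform A (v + t *\<^sub>R a)"
  shows "(bform A a v)\<^sup>2 \<le> qform A a * qform A v"
proof -
  define b where "b = bform A a v"
  have line: "0 \<le> qform A v + 2 * t * b + t\<^sup>2 * qform A a" for t
    using assms(3)[of t] bform_commute[OF assms(1), of v a]
    by (simp add: qform_add_scaleR b_def algebra_simps)
  show ?thesis
  proof (cases "qform A a = 0")
    case True
    have "b = 0"
    proof (rule ccontr)
      assume "b \<noteq> 0"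
      then show False
        using line[of "- (qform A v + 1) / (2 * b)"] True by (simp add: field_simps)
    qed
    then show ?thesis by (simp add: b_def True)
  next
    case False
    then have pos: "0 < qform A a" using assms(2) by simp
    have "0 \<le> qform A v - b\<^sup>2 / qform A a"
      using line[of "- b / qform A a"] pos by (simp add: field_simps power2_eq_square)
    then show ?thesis using pos by (simp add: b_def pos_divide_le_eq mult.commute)
  qed
qed

lemma psd_kernel:
  assumes "psd A" "qform A u = 0"
  shows "A *v u = 0"
proof -
  have "(bform A u (A *v u))\<^sup>2 \<le> 0"
    using bform_square_le[of A u "A *v u"] assms by (simp add: psd_iff_qform)
  moreover have "bform A u (A *v u) = (A *v u) \<bullet> (A *v u)"
    using assms(1) bform_commute[of A u "A *v u"] by (simp add: bform_def psd_iff_qform)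
  ultimately show ?thesis by simp
qed

section \<open>The S-lemma\<close>

lemma quadratic_has_roots_of_opposite_signs:
  fixes a b c :: real
  assumes "0 < a" "c < 0"
  obtains s1 s2 where "s1 < 0" "0 < s2" "a * s1\<^sup>2 + b * s1 + c = 0" "a * s2\<^sup>2 + b * s2 + c = 0"
proof -
  define r where "r = sqrt (b\<^sup>2 - 4 * a * c)"
  have disc: "b\<^sup>2 < b\<^sup>2 - 4 * a * c" using assms by (simp add: mult_pos_neg)
  moreover have "0 \<le> b\<^sup>2" by simp
  ultimately have r2: "r\<^sup>2 = b\<^sup>2 - 4 * a * c"
    unfolding r_def by (intro real_sqrt_pow2) linarith
  have "\<bar>b\<bar> < r"
    unfolding r_def using disc real_less_rsqrt[of "\<bar>b\<bar>"] by simp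
  then have neg: "(- b - r) / (2 * a) < 0" and pos: "0 < (- b + r) / (2 * a)"
    using assms(1) by (simp_all add: divide_neg_pos)
  have root: "a * ((- b + e * r) / (2 * a))\<^sup>2 + b * ((- b + e * r) / (2 * a)) + c = 0"
    if "e\<^sup>2 = 1" for e
  proof -
    have "4 * a * (a * ((- b + e * r) / (2 * a))\<^sup>2 + b * ((- b + e * r) / (2 * a)) + c)
        = e\<^sup>2 * r\<^sup>2 - b\<^sup>2 + 4 * a * c"
      using assms(1) by (simp add: field_simps power2_eq_square)
    then show ?thesis using that r2 assms(1) by simp
  qed
  show ?thesis
    using that[OF neg pos] root[of "-1"] root[of 1] by simp
qed

lemma qform_cross_le:
  assumes H: "\<forall>z. 0 \<le> qform B z \<longrightarrow> 0 \<le> qform A z"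
    and x: "0 < qform B x" and y: "qform B y < 0"
  shows "qform A x * qform B y \<le> qform A y * qform B x"
proof -
  define pA where "pA = bform A y x + bform A x y"
  define pB where "pB = bform B y x + bform B x y"
  have A_line: "qform A (y + s *\<^sub>R x) = qform A y + s * pA + s\<^sup>2 * qform A x" for s
    unfolding pA_def by (rule qform_add_scaleR)
  have B_line: "qform B (y + s *\<^sub>R x) = qform B y + s * pB + s\<^sup>2 * qform B x" for s
    unfolding pB_def by (rule qform_add_scaleR)
  obtain s1 s2 where s: "s1 < 0" "0 < s2"
    and "qform B x * s1\<^sup>2 + pB * s1 + qform B y = 0" "qform B x * s2\<^sup>2 + pB * s2 + qform B y = 0"
    using quadratic_has_roots_of_opposite_signs[OF x y] .
  then have roots: "qform B (y + s1 *\<^sub>R x) = 0" "qform B (y + s2 *\<^sub>R x) = 0"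
    unfolding B_line by (simp_all add: algebra_simps)
  define c where "c = qform A y * qform B x - qform A x * qform B y"
  define d where "d = pA * qform B x - qform A x * pB"
  text \<open>The terms in \<open>s\<^sup>2\<close> cancel, so this combination is affine in \<open>s\<close>.\<close>
  have affine: "c + s * d = qform A (y + s *\<^sub>R x) * qform B x - qform A x * qform B (y + s *\<^sub>R x)"
    for s
    unfolding c_def d_def A_line B_line by (simp add: algebra_simps power2_eq_square)
  have "0 \<le> c + s1 * d" "0 \<le> c + s2 * d"
    using affine[of s1] affine[of s2] roots H x by simp_all
  then have "0 \<le> s2 * (c + s1 * d)" "0 \<le> (- s1) * (c + s2 * d)"
    using s by (simp_all only: mult_nonneg_nonneg less_imp_le neg_0_le_iff_le)
  then have "0 \<le> s2 * (c + s1 * d) + (- s1) * (c + s2 * d)"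
    by (rule add_nonneg_nonneg)
  moreover have "(s2 - s1) * c = s2 * (c + s1 * d) + (- s1) * (c + s2 * d)"
    by (simp add: algebra_simps)
  ultimately have "0 \<le> (s2 - s1) * c"
    by linarith
  then show ?thesis
    using s by (simp add: c_def zero_le_mult_iff)
qed

text \<open>The multiplier is the infimum of \<open>qform A / qform B\<close> over the cone where \<open>qform B\<close> is
  positive.\<close>

lemma S_lemma:
  assumes H: "\<forall>z. 0 \<le> qform B z \<longrightarrow> 0 \<le> qform A z" and x0: "0 < qform B x0"
  obtains \<tau> where "0 \<le> \<tau>" "\<And>z. 0 \<le> qform A z - \<tau> * qform B z"
proof -
  define R where "R = (\<lambda>z. qform A z / qform B z) ` {z. 0 < qform B z}"
  define \<tau> where "\<tau> = Inf R"
  have R_ne: "R \<noteq> {}" using x0 R_def by auto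
  have R_nonneg: "v \<in> R \<Longrightarrow> 0 \<le> v" for v using H unfolding R_def by auto
  then have "bdd_below R" by (intro bdd_belowI[where m = 0]) auto
  have "0 \<le> \<tau>" unfolding \<tau>_def using R_ne R_nonneg by (intro cInf_greatest) auto
  moreover have "0 \<le> qform A z - \<tau> * qform B z" for z
  proof (cases "qform B z" "0::real" rule: linorder_cases)
    case greater
    have "\<tau> \<le> qform A z / qform B z"
      unfolding \<tau>_def using \<open>bdd_below R\<close> greater R_def by (intro cInf_lower) auto
    then show ?thesis using greater by (simp add: pos_le_divide_eq)
  next
    case equal
    then show ?thesis using H by simp
  next
    case less
    have "qform A z / qform B z \<le> \<tau>"
      unfolding \<tau>_def
    proof (rule cInf_greatest[OF R_ne])
      fix v assume "v \<in> R"
      then obtain x where x: "0 < qform B x" "v = qform A x / qform B x" unfolding R_def by auto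
      then have "qform A x = v * qform B x" by simp
      then have "(v * qform B z) * qform B x \<le> qform A z * qform B x"
        using qform_cross_le[OF H x(1) less] by (simp add: ac_simps)
      then have "v * qform B z \<le> qform A z" using x(1) mult_le_cancel_right_pos by blast
      then show "qform A z / qform B z \<le> v" using less by (simp add: neg_divide_le_eq)
    qed
    then show ?thesis using less by (simp add: neg_divide_le_eq)
  qed
  ultimately show ?thesis using that by blast
qed

lemma qform_coercive_on_cone:
  fixes A B :: "real^'m^'m"
  assumes H: "\<forall>z. z \<noteq> 0 \<longrightarrow> 0 \<le> qform B z \<longrightarrow> 0 < qform A z"
  obtains e where "0 < e" "\<And>z. 0 \<le> qform B z \<Longrightarrow> e * (z \<bullet> z) \<le> qform A z"
proof -
  define K where "K = sphere (0::real^'m) 1 \<inter> {z. 0 \<le> qform B z}"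
  obtain e where e: "0 < e" "\<And>u. u \<in> K \<Longrightarrow> e \<le> qform A u"
  proof (cases "K = {}")
    case True
    then show ?thesis using that[of 1] by simp
  next
    case False
    have "compact K"
      unfolding K_def by (intro compact_Int_closed compact_sphere closed_Collect_le
          continuous_on_const continuous_on_qform)
    then obtain u0 where "u0 \<in> K" "\<And>u. u \<in> K \<Longrightarrow> qform A u0 \<le> qform A u"
      using continuous_attains_inf[OF _ False continuous_on_qform] by blast
    moreover have "0 < qform A u0"
      using \<open>u0 \<in> K\<close> H unfolding K_def
      by (metis IntD1 IntD2 mem_Collect_eq mem_sphere_0 norm_zero zero_neq_one)
    ultimately show ?thesis using that by blast
  qed
  have "e * (z \<bullet> z) \<le> qform A z" if "0 \<le> qform B z" for z
  proof (cases "z = 0")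
    case False
    define u where "u = (1 / norm z) *\<^sub>R z"
    have "u \<in> K"
      using False that qform_scaleR[of B "1 / norm z" z] unfolding K_def u_def by auto
    then have "e \<le> qform A u" by (rule e(2))
    also have "qform A u = (1 / norm z)\<^sup>2 * qform A z"
      unfolding u_def by (rule qform_scaleR)
    finally show ?thesis
      using False by (simp add: power2_norm_eq_inner[symmetric] field_simps)
  qed simp
  then show ?thesis using that e(1) by blast
qed

lemma S_lemma_strict:
  assumes H: "\<forall>z. z \<noteq> 0 \<longrightarrow> 0 \<le> qform B z \<longrightarrow> 0 < qform A z" and x0: "0 < qform B x0"
  obtains \<tau> where "0 \<le> \<tau>" "\<And>z. z \<noteq> 0 \<Longrightarrow> 0 < qform A z - \<tau> * qform B z"
proof -
  obtain e where e: "0 < e" "\<And>z. 0 \<le> qform B z \<Longrightarrow> e * (z \<bullet> z) \<le> qform A z"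
    using qform_coercive_on_cone[OF H] by blast
  have "\<forall>z. 0 \<le> qform B z \<longrightarrow> 0 \<le> qform (A - e *\<^sub>R mat 1) z"
    using e(2) by (simp add: qform_diff_scaleR qform_mat_1)
  then obtain \<tau> where "0 \<le> \<tau>" and shifted: "\<And>z. 0 \<le> qform (A - e *\<^sub>R mat 1) z - \<tau> * qform B z"
    using S_lemma[OF _ x0] by blast
  moreover have "0 < qform A z - \<tau> * qform B z" if "z \<noteq> 0" for z
  proof -
    have "0 < e * (z \<bullet> z)" using e(1) that by simp
    then show ?thesis using shifted[of z] by (simp add: qform_diff_scaleR qform_mat_1)
  qed
  ultimately show ?thesis using that by blast
qed

section \<open>Block vectors and the sets \<open>S_N\<close>\<close>

definition inl_vec :: "real^'k \<Rightarrow> real^('k::finite + 'n::finite)" where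
  "inl_vec v = (\<chi> i. case i of Inl a \<Rightarrow> v $ a | Inr b \<Rightarrow> 0)"

definition inr_vec :: "real^'n \<Rightarrow> real^('k::finite + 'n::finite)" where
  "inr_vec w = (\<chi> i. case i of Inl a \<Rightarrow> 0 | Inr b \<Rightarrow> w $ b)"

definition lpart :: "real^('k::finite + 'n::finite) \<Rightarrow> real^'k" where
  "lpart x = (\<chi> a. x $ Inl a)"

definition rpart :: "real^('k::finite + 'n::finite) \<Rightarrow> real^'n" where
  "rpart x = (\<chi> b. x $ Inr b)"

definition blk21 :: "real^('k::finite + 'n::finite)^('k + 'n) \<Rightarrow> real^'k^'n" where
  "blk21 N = (\<chi> i j. N $ Inr i $ Inl j)"

lemma lpart_inl_vec [simp]: "lpart (inl_vec v) = v"
  and rpart_inl_vec [simp]: "rpart (inl_vec v) = 0"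
  and lpart_inr_vec [simp]: "lpart (inr_vec w) = 0"
  and rpart_inr_vec [simp]: "rpart (inr_vec w) = w"
  by (simp_all add: lpart_def rpart_def inl_vec_def inr_vec_def vec_eq_iff)

lemma lpart_add [simp]: "lpart (x + y) = lpart x + lpart y"
  and rpart_add [simp]: "rpart (x + y) = rpart x + rpart y"
  and lpart_scaleR [simp]: "lpart (c *\<^sub>R x) = c *\<^sub>R lpart x"
  and rpart_scaleR [simp]: "rpart (c *\<^sub>R x) = c *\<^sub>R rpart x"
  and lpart_uminus [simp]: "lpart (- x) = - lpart x"
  and rpart_uminus [simp]: "rpart (- x) = - rpart x"
  and lpart_0 [simp]: "lpart 0 = 0"
  and rpart_0 [simp]: "rpart 0 = 0"
  by (simp_all add: lpart_def rpart_def vec_eq_iff)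

lemma vec_eq_iff_parts: "x = y \<longleftrightarrow> lpart x = lpart y \<and> rpart x = rpart y"
  by (auto simp: lpart_def rpart_def vec_eq_iff) (metis sum.exhaust)

lemma inl_vec_eq_0_iff [simp]: "inl_vec v = 0 \<longleftrightarrow> v = 0"
  and inr_vec_eq_0_iff [simp]: "inr_vec w = 0 \<longleftrightarrow> w = 0"
  by (auto simp: vec_eq_iff_parts)

lemma inr_vec_0 [simp]: "inr_vec 0 = 0"
  and inr_vec_uminus: "inr_vec (- w) = - inr_vec w"
  and inr_vec_add: "inr_vec (v + w) = inr_vec v + inr_vec w"
  and inr_vec_scaleR: "inr_vec (c *\<^sub>R w) = c *\<^sub>R inr_vec w"
  by (simp_all add: vec_eq_iff_parts)

lemma sum_UNIV_Plus:
  fixes f :: "'k::finite + 'n::finite \<Rightarrow> 'a::comm_monoid_add"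
  shows "(\<Sum>i\<in>UNIV. f i) = (\<Sum>a\<in>UNIV. f (Inl a)) + (\<Sum>b\<in>UNIV. f (Inr b))"
  using sum.Plus[of "UNIV :: 'k::finite set" "UNIV :: 'n::finite set" f] by (simp add: comp_def)

lemma inner_parts: "(x :: real^('k::finite + 'n::finite)) \<bullet> y = lpart x \<bullet> lpart y + rpart x \<bullet> rpart y"
  unfolding inner_vec_def lpart_def rpart_def by (simp add: sum_UNIV_Plus)

lemma lpart_mult_inl_vec: "lpart (N *v inl_vec u) = blk11 N *v u"
  and rpart_mult_inl_vec: "rpart (N *v inl_vec u) = blk21 N *v u"
  and rpart_mult_inr_vec: "rpart (N *v inr_vec w) = blk22 N *v w"
  by (simp_all add: lpart_def rpart_def inl_vec_def inr_vec_def blk11_def blk21_def blk22_def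
      matrix_vector_mult_def sum_UNIV_Plus)

lemma qform_inl_vec: "qform N (inl_vec u) = qform (blk11 N) u"
  and qform_inr_vec: "qform N (inr_vec w) = qform (blk22 N) w"
  by (simp_all add: qform_def inner_parts lpart_mult_inl_vec rpart_mult_inr_vec)

lemma stackIZ_mult: "stackIZ Z *v v = inl_vec v + inr_vec (Z *v v)"
proof -
  have "(\<Sum>j\<in>UNIV. (if a = j then 1 else 0) * v $ j) = (\<Sum>j\<in>UNIV. if a = j then v $ j else 0)"
    for a by (rule sum.cong) auto
  then show ?thesis
    by (simp add: vec_eq_iff_parts lpart_def rpart_def stackIZ_def matrix_vector_mult_def
        inl_vec_def inr_vec_def)
qed

lemma qform_quadIZ: "qform (quadIZ A Z) v = qform A (stackIZ Z *v v)"
  unfolding qform_def quadIZ_def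
  by (metis dot_lmul_matrix inner_commute matrix_vector_mul_assoc transpose_matrix_vector)

lemma symmetric_mat_quadIZ: "symmetric_mat A \<Longrightarrow> symmetric_mat (quadIZ A Z)"
  unfolding symmetric_mat_def quadIZ_def by (simp add: matrix_transpose_mul matrix_mul_assoc)

lemma S_N_iff: "symmetric_mat N \<Longrightarrow> Z \<in> S_N N \<longleftrightarrow> (\<forall>v. 0 \<le> qform N (stackIZ Z *v v))"
  by (simp add: S_N_def psd_iff_qform symmetric_mat_quadIZ qform_quadIZ)

lemma pd_quadIZ_if_pd_diff:
  fixes M N :: "real^('k::finite + 'n::finite)^('k + 'n)"
  assumes "symmetric_mat M" "symmetric_mat N" "0 \<le> \<alpha>" "pd (M - \<alpha> *\<^sub>R N)" "Z \<in> S_N N"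
  shows "pd (quadIZ M Z)"
  unfolding pd_iff_qform
proof (intro conjI allI impI)
  fix v :: "real^'k" assume "v \<noteq> 0"
  define x where "x = stackIZ Z *v v"
  have "x \<noteq> 0" using \<open>v \<noteq> 0\<close> unfolding x_def stackIZ_mult by (simp add: vec_eq_iff_parts)
  then have "0 < qform M x - \<alpha> * qform N x"
    using assms(4) by (simp add: pd_iff_qform qform_diff_scaleR)
  moreover have "0 \<le> \<alpha> * qform N x"
    using assms(2,3,5) by (simp add: S_N_iff x_def)
  ultimately show "0 < qform (quadIZ M Z) v"
    by (simp add: qform_quadIZ x_def)
qed (rule symmetric_mat_quadIZ[OF assms(1)])

section \<open>The Schur complement of \<open>N\<^sub>2\<^sub>2\<close>\<close>

lemma matrix_inv_right: "invertible A \<Longrightarrow> A ** matrix_inv A = mat 1"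
  unfolding invertible_def matrix_inv_def by (rule someI2_ex) auto

text \<open>The graph of \<open>schur_gain N = -N\<^sub>2\<^sub>2\<^sup>-\<^sup>1 N\<^sub>2\<^sub>1\<close> is the \<open>N\<close>-orthogonal complement of
  \<open>0 \<oplus> \<real>\<^sup>n\<close>, and \<open>N\<close> restricted to it is the Schur complement of \<open>N\<^sub>2\<^sub>2\<close>.\<close>

definition schur_gain :: "real^('k::finite + 'n::finite)^('k + 'n) \<Rightarrow> real^'k^'n" where
  "schur_gain N = matrix_inv (blk22 N) ** (- blk21 N)"

definition schur_lift :: "real^('k::finite + 'n::finite)^('k + 'n) \<Rightarrow> real^'k \<Rightarrow> real^('k + 'n)" where
  "schur_lift N u = stackIZ (schur_gain N) *v u"

lemma lpart_schur_lift [simp]: "lpart (schur_lift N u) = u"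
  and rpart_schur_lift [simp]: "rpart (schur_lift N u) = schur_gain N *v u"
  by (simp_all add: schur_lift_def stackIZ_mult)

lemma schur_lift_add_scaleR: "schur_lift N (a + c *\<^sub>R b) = schur_lift N a + c *\<^sub>R schur_lift N b"
  by (simp add: schur_lift_def matrix_vector_right_distrib matrix_vector_mult_scaleR)

lemma schur_lift_0 [simp]: "schur_lift N 0 = 0"
  by (simp add: schur_lift_def)

locale indefinite_block_form =
  fixes N :: "real^('k::finite + 'n::finite)^('k + 'n)"
  assumes symmetric: "symmetric_mat N"
    and psd_blk11: "psd (blk11 N)"
    and neg_blk22: "pd (- blk22 N)"
begin

lemma qform_inr_vec_neg: "w \<noteq> 0 \<Longrightarrow> qform N (inr_vec w) < 0"
  using neg_blk22 by (simp add: pd_iff_qform qform_inr_vec qform_uminus_mat)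

lemma qform_inr_vec_nonpos: "qform N (inr_vec w) \<le> 0"
  using qform_inr_vec_neg[of w] by (cases "w = 0") auto

lemma invertible_blk22: "invertible (blk22 N)"
proof -
  have "blk22 N *v w = 0 \<Longrightarrow> w = 0" for w
    using qform_inr_vec_neg[of w] unfolding qform_inr_vec by (auto simp: qform_def)
  then show ?thesis
    using invertible_left_inverse matrix_left_invertible_ker by metis
qed

lemma blk22_mult_schur_gain: "blk22 N *v (schur_gain N *v u) = - (blk21 N *v u)"
  using matrix_inv_right[OF invertible_blk22]
  by (simp add: schur_gain_def matrix_vector_mul_assoc matrix_mul_assoc matrix_vector_mult_uminus_left)

lemma rpart_mult_schur_lift: "rpart (N *v schur_lift N u) = 0"
  using blk22_mult_schur_gain[of u]
  by (simp add: schur_lift_def stackIZ_mult matrix_vector_right_distrib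
      rpart_mult_inl_vec rpart_mult_inr_vec)

lemma bform_inr_vec_schur_lift: "bform N (inr_vec w) (schur_lift N u) = 0"
  by (simp add: bform_def inner_parts rpart_mult_schur_lift)

lemma qform_schur_lift_add_inr_vec:
  "qform N (schur_lift N u + inr_vec w) = qform N (schur_lift N u) + qform N (inr_vec w)"
  using bform_inr_vec_schur_lift bform_commute[OF symmetric, of "inr_vec w" "schur_lift N u"]
  by (simp add: qform_add)

lemma qform_schur_lift:
  "qform N (schur_lift N u) = qform (blk11 N) u - qform N (inr_vec (schur_gain N *v u))"
proof -
  let ?h = "schur_gain N *v u"
  have "inl_vec u = schur_lift N u + inr_vec (- ?h)"
    by (simp add: vec_eq_iff_parts)
  then have "qform (blk11 N) u = qform N (schur_lift N u + inr_vec (- ?h))"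
    by (simp add: qform_inl_vec[symmetric])
  also have "\<dots> = qform N (schur_lift N u) + qform N (inr_vec (- ?h))"
    by (rule qform_schur_lift_add_inr_vec)
  finally show ?thesis by (simp add: inr_vec_uminus)
qed

lemma qform_blk11_nonneg: "0 \<le> qform (blk11 N) u"
  using psd_blk11 by (simp add: psd_iff_qform)

lemma qform_schur_lift_nonneg: "0 \<le> qform N (schur_lift N u)"
  using qform_blk11_nonneg[of u] qform_inr_vec_nonpos[of "schur_gain N *v u"]
  by (simp add: qform_schur_lift)

lemma qform_schur_lift_pos:
  assumes "invertible N" "u \<noteq> 0"
  shows "0 < qform N (schur_lift N u)"
proof (rule ccontr)
  assume "\<not> ?thesis"
  then have "qform N (schur_lift N u) = 0"
    using qform_schur_lift_nonneg[of u] by simp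
  then have "qform (blk11 N) u = 0" "qform N (inr_vec (schur_gain N *v u)) = 0"
    using qform_blk11_nonneg[of u] qform_inr_vec_nonpos[of "schur_gain N *v u"]
    unfolding qform_schur_lift by linarith+
  then have "blk11 N *v u = 0" "schur_gain N *v u = 0"
    using psd_kernel[OF psd_blk11] qform_inr_vec_neg[of "schur_gain N *v u"] by force+
  then have "N *v inl_vec u = 0"
    using blk22_mult_schur_gain[of u]
    by (simp add: vec_eq_iff_parts lpart_mult_inl_vec rpart_mult_inl_vec)
  moreover have "\<forall>x. N *v x = 0 \<longrightarrow> x = 0"
    using assms(1) by (simp add: invertible_left_inverse matrix_left_invertible_ker)
  ultimately have "inl_vec u = 0"
    by auto
  then show False using assms(2) by simp
qed

lemma schur_gain_in_S_N: "schur_gain N \<in> S_N N"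
  using qform_schur_lift_nonneg by (simp add: S_N_iff[OF symmetric] schur_lift_def)

lemma bform_schur_lift: "bform N (schur_lift N a) (schur_lift N v) = lpart (N *v schur_lift N a) \<bullet> v"
  using bform_commute[OF symmetric, of "schur_lift N a" "schur_lift N v"]
  by (simp add: bform_def inner_parts rpart_mult_schur_lift inner_commute)

text \<open>The witness is \<open>Z = schur_gain N + y g\<^sup>T\<close> with \<open>g \<bullet> \<xi> = 1\<close>; that \<open>Z \<in> S_N N\<close> is the
  Cauchy--Schwarz inequality for the semidefinite form \<open>N\<close> induces on the graph of
  \<open>schur_gain N\<close>.\<close>

lemma rank_one_update_in_S_N:
  assumes pos: "0 < qform N (schur_lift N \<xi>)"
    and cone: "0 \<le> qform N (schur_lift N \<xi>) + qform N (inr_vec y)"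
  obtains Z where "Z \<in> S_N N" "stackIZ Z *v \<xi> = schur_lift N \<xi> + inr_vec y"
proof -
  define s where "s = qform N (schur_lift N \<xi>)"
  define g where "g = (1 / s) *\<^sub>R lpart (N *v schur_lift N \<xi>)"
  define Z where "Z = schur_gain N + (\<chi> i j. y $ i * g $ j)"
  have g: "g \<bullet> v = bform N (schur_lift N \<xi>) (schur_lift N v) / s" for v
    by (simp add: g_def bform_schur_lift)
  have stack: "stackIZ Z *v v = schur_lift N v + (g \<bullet> v) *\<^sub>R inr_vec y" for v
  proof -
    have "(\<chi> i j. y $ i * g $ j) *v v = (g \<bullet> v) *\<^sub>R y"
      by (simp add: matrix_vector_mult_def vec_eq_iff inner_vec_def sum_distrib_left mult_ac)
    then show ?thesis
      by (simp add: Z_def stackIZ_mult schur_lift_def matrix_vector_mult_add_rdistrib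
          inr_vec_add inr_vec_scaleR add.assoc)
  qed
  have "0 \<le> qform N (stackIZ Z *v v)" for v
  proof -
    define c where "c = g \<bullet> v"
    have "(bform N (schur_lift N \<xi>) (schur_lift N v))\<^sup>2 \<le> s * qform N (schur_lift N v)"
      unfolding s_def using qform_schur_lift_nonneg
      by (intro bform_square_le symmetric) (simp_all flip: schur_lift_add_scaleR)
    moreover have "c\<^sup>2 * s = (bform N (schur_lift N \<xi>) (schur_lift N v))\<^sup>2 / s"
      using pos unfolding c_def g s_def by (simp add: power2_eq_square)
    ultimately have "c\<^sup>2 * s \<le> qform N (schur_lift N v)"
      using pos by (simp add: s_def pos_divide_le_eq mult.commute)
    moreover have "c\<^sup>2 * (- qform N (inr_vec y)) \<le> c\<^sup>2 * s"
      using cone unfolding s_def by (intro mult_left_mono) simp_all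
    moreover have "qform N (stackIZ Z *v v) = qform N (schur_lift N v) + c\<^sup>2 * qform N (inr_vec y)"
      unfolding stack c_def[symmetric]
      by (simp only: inr_vec_scaleR[symmetric] qform_schur_lift_add_inr_vec)
        (simp add: inr_vec_scaleR qform_scaleR)
    ultimately show ?thesis by linarith
  qed
  moreover have "g \<bullet> \<xi> = 1"
    using pos by (simp add: g s_def bform_def qform_def)
  ultimately show ?thesis
    using that[of Z] by (simp add: S_N_iff[OF symmetric] stack)
qed

lemma nonneg_cone_in_graphs_of_S_N:
  assumes "x \<noteq> 0" "0 \<le> qform N x"
  obtains Z where "Z \<in> S_N N" "lpart x \<noteq> 0" "stackIZ Z *v lpart x = x"
proof -
  define \<xi> where "\<xi> = lpart x"
  define y where "y = rpart x - schur_gain N *v \<xi>"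
  have x: "x = schur_lift N \<xi> + inr_vec y"
    by (simp add: vec_eq_iff_parts \<xi>_def y_def)
  then have cone: "0 \<le> qform N (schur_lift N \<xi>) + qform N (inr_vec y)"
    using assms(2) by (simp add: qform_schur_lift_add_inr_vec)
  show ?thesis
  proof (cases "y = 0")
    case True
    then have "stackIZ (schur_gain N) *v \<xi> = x"
      using x by (simp add: schur_lift_def)
    moreover have "\<xi> \<noteq> 0"
      using assms(1) x True by auto
    ultimately show ?thesis
      using that[OF schur_gain_in_S_N] unfolding \<xi>_def by blast
  next
    case False
    then have pos: "0 < qform N (schur_lift N \<xi>)"
      using cone qform_inr_vec_neg by fastforce
    then have "\<xi> \<noteq> 0" by auto
    obtain Z where "Z \<in> S_N N" "stackIZ Z *v \<xi> = schur_lift N \<xi> + inr_vec y"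
      by (rule rank_one_update_in_S_N[OF pos cone])
    then show ?thesis
      using that \<open>\<xi> \<noteq> 0\<close> x unfolding \<xi>_def by simp
  qed
qed

end

theorem corollary2:
  fixes M N :: "real^('k::finite + 'n::finite)^('k + 'n)"
  assumes "symmetric_mat M" and "symmetric_mat N"
    and "invertible N"
    and "psd (blk11 N)" and "pd (- blk22 N)"
  shows "(\<forall>Z \<in> S_N N. pd (quadIZ M Z)) \<longleftrightarrow> (\<exists>\<alpha>::real. \<alpha> \<ge> 0 \<and> pd (M - \<alpha> *\<^sub>R N))"
proof
  assume robust: "\<forall>Z \<in> S_N N. pd (quadIZ M Z)"
  interpret indefinite_block_form N
    using assms(2,4,5) by unfold_locales
  have cone: "\<forall>x. x \<noteq> 0 \<longrightarrow> 0 \<le> qform N x \<longrightarrow> 0 < qform M x"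
  proof (intro allI impI)
    fix x :: "real^('k + 'n)" assume "x \<noteq> 0" "0 \<le> qform N x"
    then obtain Z where "Z \<in> S_N N" "lpart x \<noteq> 0" "stackIZ Z *v lpart x = x"
      by (rule nonneg_cone_in_graphs_of_S_N)
    moreover from this(1) have "pd (quadIZ M Z)"
      using robust by blast
    ultimately have "0 < qform (quadIZ M Z) (lpart x)"
      by (simp add: pd_iff_qform)
    then show "0 < qform M x"
      by (simp add: qform_quadIZ \<open>stackIZ Z *v lpart x = x\<close>)
  qed
  have slater: "0 < qform N (schur_lift N (axis undefined 1))"
    using assms(3) by (intro qform_schur_lift_pos) simp_all
  obtain \<tau> where "0 \<le> \<tau>" and \<tau>: "\<And>z. z \<noteq> 0 \<Longrightarrow> 0 < qform M z - \<tau> * qform N z"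
    using S_lemma_strict[OF cone slater] by blast
  have "pd (M - \<tau> *\<^sub>R N)"
    using \<tau> assms(1,2) by (simp add: pd_iff_qform qform_diff_scaleR symmetric_mat_diff_scaleR)
  then show "\<exists>\<alpha>. \<alpha> \<ge> 0 \<and> pd (M - \<alpha> *\<^sub>R N)"
    using \<open>0 \<le> \<tau>\<close> by blast
next
  assume "\<exists>\<alpha>. \<alpha> \<ge> 0 \<and> pd (M - \<alpha> *\<^sub>R N)"
  then show "\<forall>Z \<in> S_N N. pd (quadIZ M Z)"
    using pd_quadIZ_if_pd_diff assms(1,2) by blast
qed

end
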